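(* Let $X$ be an integral regular projective curve of genus $g$ over $\mathbb{F}_q$ and $\mathbf{n}_m=(n_0,\dots,n_m)$ ($m\ge0$) a tuple of positive integers. Then $$\operatorname{Res}_{T_{\mathbf{n}_m}=1}\widehat Z^{(\mathbf{n}_m)}_X(T_{\mathbf{n}_m})=q_{\mathbf{n}_{m-1}}^{\binom{n_m}{2}(g-1)}\sum_{\substack{d_1,\dots,d_k>0\\d_1+\cdots+d_k=n_m}}\frac{\widehat v_{d_1}\cdots\widehat v_{d_k}}{\prod_{j=1}^{k-1}(1-q_{\mathbf{n}_{m-1}}^{d_j+d_{j+1}})}.$$
   Context: Let $\zeta_X(s)=\sum_{D\ge 0}N(D)^{-s}$ be the Artin zeta function of $X$ ($D$ running over effective divisors) and $\widehat\zeta_X(s)=q^{s(g-1)}\zeta_X(s)$ the complete Artin zeta function, a rational function of $q^{-s}$. Derived zeta functions are defined recursively. For the empty tuple $\mathbf{n}_{-1}=()$ put $q_{\mathbf{n}_{-1}}=q$, $T_{\mathbf{n}_{-1}}=q^{-s}$, $\widehat\zeta^{(\mathbf{n}_{-1})}_X=\widehat\zeta_X$. For a tuple $\mathbf{n}_m=(n_0,\dots,n_m)$ of positive integers ($m\ge 0$) put $\mathbf{n}_{m-1}=(n_0,\dots,n_{m-1})$, $q_{\mathbf{n}_m}=q^{n_0n_1\cdots n_m}$, $T_{\mathbf{n}_m}=q^{-n_0n_1\cdots n_m s}$. Writing $\widehat Z^{(\mathbf{n}_{m-1})}_X(T_{\mathbf{n}_{m-1}}):=\widehat\zeta^{(\mathbf{n}_{m-1})}_X(s)$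 (a rational function of $T_{\mathbf{n}_{m-1}}$), set $\widehat\zeta^{(\mathbf{n}_{m-1})}_X(1):=\operatorname{Res}_{T_{\mathbf{n}_{m-1}}=1}\widehat Z^{(\mathbf{n}_{m-1})}_X(T_{\mathbf{n}_{m-1}})$ and for integers $N\ge 1$, $\widehat v_N:=\prod_{k=1}^{N}\widehat\zeta^{(\mathbf{n}_{m-1})}_X(k)$. Then $$\widehat\zeta^{(\mathbf{n}_m)}_X(s)=q_{\mathbf{n}_{m-1}}^{\binom{n_m}{2}(g-1)}\sum_{a=1}^{n_m}\Biggl(\sum_{\substack{k_1,\dots,k_p>0\\k_1+\cdots+k_p=n_m-a}}\frac{\widehat v_{k_1}\cdots\widehat v_{k_p}}{\prod_{j=1}^{p-1}(1-q_{\mathbf{n}_{m-1}}^{k_j+k_{j+1}})}\cdot\frac{1}{1-q_{\mathbf{n}_{m-1}}^{n_ms-n_m+a+k_p}}\Biggr)\widehat\zeta^{(\mathbf{n}_{m-1})}_X(n_ms-n_m+a)\Biggl(\sum_{\substack{l_1,\dots,l_r>0\\l_1+\cdots+l_r=a-1}}\frac{1}{1-q_{\mathbf{n}_{m-1}}^{-n_ms+n_m-a+1+l_1}}\cdot\frac{\widehat v_{l_1}\cdots\widehat v_{l_r}}{\prod_{j=1}^{r-1}(1-q_{\mathbf{n}_{m-1}}^{l_j+l_{j+1}})}\Biggr),$$ where the inner sums run over ordered tuples of positive integers (of any length) with the indicated sum, and an inner sum over tuples summing to $0$ is defined to be $1$. One writes $\widehat Z^{(\mathbf{n}_m)}_X(T_{\mathbf{n}_m}):=\widehat\zeta^{(\mathbf{n}_m)}_X(s)$,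 a rational function of $T_{\mathbf{n}_m}$. (For $m=0$ this is the $\mathrm{SL}_{n_0}$-zeta function of $X$, which coincides with the rank $n_0$ non-abelian zeta function of $X$.) *)

theory Defs
  imports "HOL-Complex_Analysis.Complex_Analysis" "HOL-Computational_Algebra.Polynomial"
begin

text \<open>For an integral regular projective curve X of genus g over F_q (with F_q its full
  constant field), the Artin zeta function in the variable T = q^(-s) is
  Z_X(T) = P_X(T) / ((1 - T)(1 - q T)) where P_X is an integer polynomial of degree 2g with
  P_X(0) = 1, the functional equation P_X(T) = q^g T^(2g) P_X(1/(qT)), and all of whose roots
  have absolute value q^(-1/2) (Riemann hypothesis).\<close>

definition prime_power :: "nat \<Rightarrow> bool" where
  "prime_power q \<longleftrightarrow> (\<exists>p e. prime p \<and> e \<ge> 1 \<and> q = p ^ e)"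

definition curve_L_poly :: "nat \<Rightarrow> nat \<Rightarrow> int poly \<Rightarrow> bool" where
  "curve_L_poly q g P \<longleftrightarrow>
     prime_power q \<and> degree P = 2 * g \<and> coeff P 0 = 1 \<and>
     (\<forall>T::complex. T \<noteq> 0 \<longrightarrow>
        poly (map_poly of_int P) T
          = of_nat q ^ g * T ^ (2 * g) * poly (map_poly of_int P) (1 / (of_nat q * T))) \<and>
     (\<forall>z::complex. poly (map_poly of_int P) z = 0 \<longrightarrow> norm z = 1 / sqrt (real q))"

text \<open>Complete Artin zeta function as a function of T = q^(-s):
  q^(s(g-1)) Z_X(q^(-s)) = T^(1-g) Z_X(T).\<close>

definition Zhat0 :: "nat \<Rightarrow> nat \<Rightarrow> int poly \<Rightarrow> complex \<Rightarrow> complex" where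
  "Zhat0 q g P T = T powi (1 - int g) * poly (map_poly of_int P) T / ((1 - T) * (1 - of_nat q * T))"

definition compositions :: "nat \<Rightarrow> nat list set" where
  "compositions N = {ks. sum_list ks = N \<and> 0 \<notin> set ks}"

definition adj_prod :: "complex \<Rightarrow> nat list \<Rightarrow> complex" where
  "adj_prod Q ks = (\<Prod>j<length ks - 1. (1 - Q ^ (ks ! j + ks ! (j + 1))))"

text \<open>The value zeta-hat(k) of a derived zeta function Z (as function of its own variable
  T, with q_(previous) = Q): the residue at T = 1 for k = 1, and for k >= 2 the value of the
  rational function at T = Q^(-k) (taken as a limit, so that removable singularities of
  the pointwise formula do not matter).\<close>
definition zhat_at :: "(complex \<Rightarrow> complex) \<Rightarrow> complex \<Rightarrow> nat \<Rightarrow> complex" where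
  "zhat_at Z Q k = (if k = 1 then residue Z 1 else Lim (at (Q powi (- int k))) Z)"

definition vhat :: "(complex \<Rightarrow> complex) \<Rightarrow> complex \<Rightarrow> nat \<Rightarrow> complex" where
  "vhat Z Q N = (\<Prod>k=1..N. zhat_at Z Q k)"

text \<open>Z is the previous derived zeta function as a function of
  T_prev, Q = q_prev, n = n_m, and the result is a function of T = T_(n_m).  With
  s the complex variable, T_prev evaluated at n s - n + a equals Q^(n-a) T,
  Q^(n s - n + a + k_p) = Q^(a + k_p - n) / T and Q^(-n s + n - a + 1 + l_1) = T Q^(n - a + 1 + l_1).\<close>
definition left_sum :: "(complex \<Rightarrow> complex) \<Rightarrow> complex \<Rightarrow> nat \<Rightarrow> nat \<Rightarrow> complex \<Rightarrow> complex" where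
  "left_sum Z Q n a T =
     (if n - a = 0 then 1 else
      (\<Sum>ks\<in>compositions (n - a).
         (\<Prod>k\<leftarrow>ks. vhat Z Q k) / adj_prod Q ks
         * (1 / (1 - Q powi (int a + int (last ks) - int n) / T))))"

definition right_sum :: "(complex \<Rightarrow> complex) \<Rightarrow> complex \<Rightarrow> nat \<Rightarrow> nat \<Rightarrow> complex \<Rightarrow> complex" where
  "right_sum Z Q n a T =
     (if a - 1 = 0 then 1 else
      (\<Sum>ls\<in>compositions (a - 1).
         (1 / (1 - T * Q ^ (n - a + 1 + hd ls)))
         * ((\<Prod>l\<leftarrow>ls. vhat Z Q l) / adj_prod Q ls)))"

definition derive_step :: "nat \<Rightarrow> (complex \<Rightarrow> complex) \<Rightarrow> complex \<Rightarrow> nat \<Rightarrow> complex \<Rightarrow> complex" where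
  "derive_step g Z Q n T =
     Q powi (int (n choose 2) * (int g - 1)) *
     (\<Sum>a=1..n. left_sum Z Q n a T * Z (Q ^ (n - a) * T) * right_sum Z Q n a T)"

fun dzeta_rev :: "nat \<Rightarrow> nat \<Rightarrow> int poly \<Rightarrow> nat list \<Rightarrow> complex \<Rightarrow> complex" where
  "dzeta_rev q g P [] = Zhat0 q g P"
| "dzeta_rev q g P (n # rs) = derive_step g (dzeta_rev q g P rs) (of_nat q ^ prod_list rs) n"

definition dzeta :: "nat \<Rightarrow> nat \<Rightarrow> int poly \<Rightarrow> nat list \<Rightarrow> complex \<Rightarrow> complex" where
  "dzeta q g P ns = dzeta_rev q g P (rev ns)"

definition qn :: "nat \<Rightarrow> nat list \<Rightarrow> complex" where
  "qn q ns = of_nat q ^ prod_list ns"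

end

theory Submission
  imports Defs
begin

(* Every derived zeta function Z, with Q the preceding q_n, satisfies the functional equation
   Z(1/(Q T)) = Z(T) and is holomorphic on |T| > 1/2 apart from at most a simple pole at T = 1;
   both properties pass from one level of the recursion to the next.  In the recursion, the
   summand for a < n has its pole at T = 1 only through the one-part composition of the left
   sum, with residue v_(n-a), while the functional equation turns the factor Z(Q^(n-a) T) at
   T = 1 into zeta(n-a+1); the summand a = n contributes the residue of Z itself.  So the
   residue is the sum over a of v_(n-a+1) times the right sum at T = 1, and prepending the
   part n-a+1 to the compositions of a-1 in the right sum gives all compositions of n. *)

lemma compositions_0 [simp]: "compositions 0 = {[]}"
  by (auto simp: compositions_def) (metis equals0I set_empty)

lemma finite_compositions: "finite (compositions N)"
proof (rule finite_subset)
  have "length ks \<le> sum_list ks" if "0 \<notin> set ks" for ks :: "nat list"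
    using that by (induction ks) auto
  then show "compositions N \<subseteq> {ks. set ks \<subseteq> {..N} \<and> length ks \<le> N}"
    by (auto simp: compositions_def member_le_sum_list)
  show "finite {ks. set ks \<subseteq> {..N} \<and> length ks \<le> N}"
    by (rule finite_lists_length_le) simp
qed

lemma composition_last_less:
  assumes ks: "ks \<in> compositions N" and "ks \<noteq> [N]" and "0 < N"
  shows "last ks < N"
proof -
  have "ks \<noteq> []" using ks \<open>0 < N\<close> by (auto simp: compositions_def)
  then have split: "ks = butlast ks @ [last ks]" by simp
  moreover have "sum_list ks = N" using ks by (simp add: compositions_def)
  ultimately have sum: "sum_list (butlast ks) + last ks = N"
    by (metis sum_list_append sum_list.Cons sum_list.Nil add_0_right)
  have "butlast ks \<noteq> []"
  proof
    assume "butlast ks = []"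
    with split sum have "ks = [N]" by simp
    with \<open>ks \<noteq> [N]\<close> show False ..
  qed
  moreover have "0 \<notin> set (butlast ks)" using ks in_set_butlastD by (fastforce simp: compositions_def)
  ultimately have "sum_list (butlast ks) \<noteq> 0" by (auto simp: neq_Nil_conv)
  with sum show ?thesis by arith
qed

lemma sum_compositions_Cons:
  assumes "0 < n"
  shows "(\<Sum>ks\<in>compositions n. f ks) = (\<Sum>d=1..n. \<Sum>ls\<in>compositions (n - d). f (d # ls))"
proof -
  let ?S = "SIGMA d:{1..n}. compositions (n - d)"
  have "compositions n = (\<lambda>(d, ls). d # ls) ` ?S"
  proof
    show "compositions n \<subseteq> (\<lambda>(d, ls). d # ls) ` ?S"
    proof
      fix ks assume ks: "ks \<in> compositions n"
      then obtain d ls where "ks = d # ls" using assms by (cases ks) (auto simp: compositions_def)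
      with ks show "ks \<in> (\<lambda>(d, ls). d # ls) ` ?S"
        by (auto simp: compositions_def intro!: image_eqI[where x = "(d, ls)"])
    qed
  qed (auto simp: compositions_def)
  moreover have "inj_on (\<lambda>(d, ls). d # ls) ?S" by (auto simp: inj_on_def)
  ultimately have "(\<Sum>ks\<in>compositions n. f ks) = (\<Sum>(d, ls)\<in>?S. f (d # ls))"
    by (simp add: sum.reindex case_prod_unfold)
  also have "\<dots> = (\<Sum>d=1..n. \<Sum>ls\<in>compositions (n - d). f (d # ls))"
    by (simp add: sum.Sigma finite_compositions)
  finally show ?thesis .
qed

lemma bij_betw_rev_compositions: "bij_betw rev (compositions N) (compositions N)"
  by (rule bij_betw_byWitness[where f' = rev]) (auto simp: compositions_def)

lemma adj_prod_singleton [simp]: "adj_prod Q [d] = 1"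
  by (simp add: adj_prod_def)

lemma adj_prod_Cons:
  assumes "ls \<noteq> []"
  shows "adj_prod Q (d # ls) = (1 - Q ^ (d + hd ls)) * adj_prod Q ls"
proof -
  obtain M where M: "length ls = Suc M" using assms by (cases ls) auto
  have "adj_prod Q (d # ls) = (\<Prod>j<Suc M. 1 - Q ^ ((d # ls) ! j + (d # ls) ! (j + 1)))"
    by (simp add: adj_prod_def M)
  also have "\<dots> = (1 - Q ^ (d + hd ls)) * (\<Prod>j<M. 1 - Q ^ (ls ! j + ls ! (j + 1)))"
    by (subst prod.lessThan_Suc_shift) (simp add: hd_conv_nth assms)
  also have "\<dots> = (1 - Q ^ (d + hd ls)) * adj_prod Q ls"
    by (simp add: adj_prod_def M)
  finally show ?thesis .
qed

lemma adj_prod_rev: "adj_prod Q (rev ks) = adj_prod Q ks"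
proof -
  let ?M = "length ks - 1"
  have "adj_prod Q ks = (\<Prod>i<?M. 1 - Q ^ (ks ! (?M - Suc i) + ks ! (?M - Suc i + 1)))"
    unfolding adj_prod_def by (rule prod.nat_diff_reindex[symmetric])
  also have "\<dots> = adj_prod Q (rev ks)"
    unfolding adj_prod_def length_rev
  proof (rule prod.cong[OF refl])
    fix i assume "i \<in> {..<?M}"
    then have "rev ks ! i = ks ! (?M - Suc i + 1)" "rev ks ! (i + 1) = ks ! (?M - Suc i)"
      by (simp_all add: rev_nth Suc_diff_Suc)
    then show "1 - Q ^ (ks ! (?M - Suc i) + ks ! (?M - Suc i + 1))
        = 1 - Q ^ (rev ks ! i + rev ks ! (i + 1))"
      by (simp add: add.commute)
  qed
  finally show ?thesis by simp
qed

lemma two_le_of_curve_L_poly: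
  assumes "curve_L_poly q g P"
  shows "2 \<le> q"
proof -
  obtain p e where p: "prime p" and "e \<ge> 1" and q: "q = p ^ e"
    using assms by (auto simp: curve_L_poly_def prime_power_def)
  have "p ^ 1 \<le> p ^ e" using \<open>e \<ge> 1\<close> p by (intro power_increasing) (auto simp: prime_gt_0_nat Suc_le_eq)
  with prime_ge_2_nat[OF p] q show ?thesis by simp
qed

lemma Zhat0_functional_eq:
  assumes "curve_L_poly q g P" and T: "T \<noteq> 0"
  shows "Zhat0 q g P (1 / (of_nat q * T)) = Zhat0 q g P T"
proof -
  define p where "p = poly (map_poly (of_int :: int \<Rightarrow> complex) P)"
  define Q :: complex where "Q = of_nat q"
  have Q: "Q \<noteq> 0" using two_le_of_curve_L_poly[OF assms(1)] by (simp add: Q_def)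
  have "p T = Q ^ g * T ^ g * T ^ g * p (1 / (Q * T))"
    using assms by (simp add: curve_L_poly_def p_def Q_def mult_2 power_add mult.assoc)
  then have p_inv: "p (1 / (Q * T)) = p T / (Q ^ g * T ^ g * T ^ g)"
    using Q T by simp
  have powi: "x powi (1 - int g) = x / x ^ g" if "x \<noteq> 0" for x :: complex
    using that by (simp add: power_int_diff)
  have QT: "1 / (Q * T) \<noteq> 0" using Q T by simp
  show ?thesis
  proof (cases "T = 1 \<or> Q * T = 1")
    case True
    then show ?thesis using Q by (auto simp: Zhat0_def Q_def)
  next
    case False
    then have "T - 1 \<noteq> 0" "Q * T - 1 \<noteq> 0" by auto
    with Q T show ?thesis
      unfolding Zhat0_def p_def[symmetric] Q_def[symmetric] powi[OF QT] powi[OF T] p_inv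
      by (simp add: field_simps)
  qed
qed

lemma left_sum_reflect:
  assumes Q: "Q \<noteq> 0" and T: "T \<noteq> 0" and a: "1 \<le> a" "a \<le> n"
  shows "left_sum Z Q n (n + 1 - a) (1 / (Q ^ n * T)) = right_sum Z Q n a T"
proof (cases "a - 1 = 0")
  case True
  then show ?thesis using a by (simp add: left_sum_def right_sum_def)
next
  case False
  have exponent: "Q powi (int (n + 1 - a) + int (last ks) - int n) / (1 / (Q ^ n * T))
      = T * Q ^ (n - a + 1 + last ks)" for ks
  proof -
    have "int (n + 1 - a) + int (last ks) - int n + int n = int (n - a + 1 + last ks)"
      using a by simp
    then have "Q powi (int (n + 1 - a) + int (last ks) - int n) * Q ^ n = Q ^ (n - a + 1 + last ks)"
      using Q by (metis power_int_add power_int_of_nat)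
    then show ?thesis by (simp add: mult.commute)
  qed
  have "right_sum Z Q n a T = (\<Sum>ls\<in>compositions (a - 1).
      1 / (1 - T * Q ^ (n - a + 1 + hd ls)) * ((\<Prod>l\<leftarrow>ls. vhat Z Q l) / adj_prod Q ls))"
    using False by (simp add: right_sum_def)
  also have "\<dots> = (\<Sum>ks\<in>compositions (a - 1).
      1 / (1 - T * Q ^ (n - a + 1 + hd (rev ks)))
        * ((\<Prod>l\<leftarrow>rev ks. vhat Z Q l) / adj_prod Q (rev ks)))"
    by (rule sum.reindex_bij_betw[OF bij_betw_rev_compositions, symmetric])
  also have "\<dots> = (\<Sum>ks\<in>compositions (a - 1).
      (\<Prod>k\<leftarrow>ks. vhat Z Q k) / adj_prod Q ks
        * (1 / (1 - Q powi (int (n + 1 - a) + int (last ks) - int n) / (1 / (Q ^ n * T)))))"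
  proof (rule sum.cong[OF refl])
    fix ks assume "ks \<in> compositions (a - 1)"
    then have "ks \<noteq> []" using False by (auto simp: compositions_def)
    then show "1 / (1 - T * Q ^ (n - a + 1 + hd (rev ks)))
        * ((\<Prod>l\<leftarrow>rev ks. vhat Z Q l) / adj_prod Q (rev ks))
      = (\<Prod>k\<leftarrow>ks. vhat Z Q k) / adj_prod Q ks
        * (1 / (1 - Q powi (int (n + 1 - a) + int (last ks) - int n) / (1 / (Q ^ n * T))))"
      unfolding exponent adj_prod_rev hd_rev rev_map[symmetric] prod_list.rev
      by (simp only: mult.commute)
  qed
  also have "\<dots> = left_sum Z Q n (n + 1 - a) (1 / (Q ^ n * T))"
    using False a by (simp add: left_sum_def)
  finally show ?thesis by simp
qed

lemma derive_step_functional_eq: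
  assumes Q: "Q \<noteq> 0" and T: "T \<noteq> 0"
    and Z_eq: "\<And>T. T \<noteq> 0 \<Longrightarrow> Z (1 / (Q * T)) = Z T"
  shows "derive_step g Z Q n (1 / (Q ^ n * T)) = derive_step g Z Q n T"
proof -
  let ?T' = "1 / (Q ^ n * T)"
  let ?f = "\<lambda>a T. left_sum Z Q n a T * Z (Q ^ (n - a) * T) * right_sum Z Q n a T"
  have "?f (n + 1 - a) ?T' = ?f a T" if a: "1 \<le> a" "a \<le> n" for a
  proof -
    have "left_sum Z Q n (n + 1 - a) ?T' = right_sum Z Q n a T"
      by (rule left_sum_reflect[OF Q T a])
    moreover have "right_sum Z Q n (n + 1 - a) ?T' = left_sum Z Q n a T"
      using left_sum_reflect[of Q ?T' "n + 1 - a" n Z] Q T a by simp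
    moreover have "Z (Q ^ (n - (n + 1 - a)) * ?T') = Z (Q ^ (n - a) * T)"
    proof -
      have "Q ^ n = Q ^ (n - (n + 1 - a)) * (Q * Q ^ (n - a))"
        using a by (simp flip: power_add power_Suc)
      then have "Q ^ (n - (n + 1 - a)) * ?T' = 1 / (Q * (Q ^ (n - a) * T))"
        using Q T by (simp add: field_simps)
      then show ?thesis using Z_eq[of "Q ^ (n - a) * T"] Q T by simp
    qed
    ultimately show ?thesis by (simp only: mult_ac)
  qed
  then have "(\<Sum>a=1..n. ?f a ?T') = (\<Sum>a=1..n. ?f a T)"
    by (subst sum.atLeastAtMost_rev) (auto intro: sum.cong)
  then show ?thesis by (simp add: derive_step_def)
qed

lemma dzeta_rev_functional_eq:
  assumes P: "curve_L_poly q g P" and "T \<noteq> 0"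
  shows "dzeta_rev q g P rs (1 / (of_nat q ^ prod_list rs * T)) = dzeta_rev q g P rs T"
  using \<open>T \<noteq> 0\<close>
proof (induction rs arbitrary: T)
  case Nil
  then show ?case using Zhat0_functional_eq[OF P] by simp
next
  case (Cons n rs)
  have "(of_nat q :: complex) \<noteq> 0" using two_le_of_curve_L_poly[OF P] by simp
  moreover have "(of_nat q :: complex) ^ prod_list (n # rs) = (of_nat q ^ prod_list rs) ^ n"
    by (simp only: prod_list.Cons power_mult[symmetric] mult.commute)
  ultimately show ?case
    using derive_step_functional_eq[of "of_nat q ^ prod_list rs" T "dzeta_rev q g P rs" g n]
      Cons.prems Cons.IH
    by simp
qed

lemma holomorphic_on_imp_isCont:
  assumes "f holomorphic_on S" "open S" "z \<in> S"
  shows "isCont f z"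
  using assms continuous_on_eq_continuous_at holomorphic_on_imp_continuous_on by blast

lemma two_le_norm_power:
  fixes Q :: complex
  assumes "2 \<le> norm Q" "0 < j"
  shows "2 \<le> norm (Q ^ j)"
proof -
  have "norm Q ^ 1 \<le> norm Q ^ j" using assms by (intro power_increasing) auto
  with assms(1) show ?thesis by (simp add: norm_power)
qed

lemma norm_power_mult_gt_1:
  fixes Q T :: complex
  assumes "2 \<le> norm Q" "0 < j" "T \<in> - cball 0 (1/2)"
  shows "1 < norm (Q ^ j * T)"
proof -
  have "2 * (1/2) < norm (Q ^ j) * norm T"
    using two_le_norm_power[OF assms(1,2)] assms(3) by (intro mult_le_less_imp_less) auto
  then show ?thesis by (simp add: norm_mult)
qed

lemma norm_power_int_neg_le:
  fixes Q :: complex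
  assumes "2 \<le> norm Q" "e < 0"
  shows "norm (Q powi e) \<le> 1/2"
proof -
  obtain m where m: "e = - int m" "0 < m" using assms(2) by (metis neg_0_less_iff_less zero_less_imp_eq_int minus_minus)
  have "norm (Q powi e) = 1 / norm (Q ^ m)"
    using m by (simp add: power_int_minus norm_inverse divide_inverse)
  also have "\<dots> \<le> 1/2" using two_le_norm_power[OF assms(1) m(2)] by (intro frac_le) auto
  finally show ?thesis .
qed

(* As |Q| >= 2, all poles T = Q^(-j), j > 0, of the recursion lie in the disc of radius 1/2,
   so on its complement T = 1 is the only candidate for a pole. *)
lemma right_sum_holomorphic:
  assumes Q: "2 \<le> norm Q"
  shows "right_sum Z Q n a holomorphic_on - cball 0 (1/2)"
proof (cases "a - 1 = 0")
  case True
  then show ?thesis by (simp add: right_sum_def[abs_def])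
next
  case False
  have "1 - T * Q ^ (n - a + 1 + hd ls) \<noteq> 0" if "T \<in> - cball 0 (1/2)" for T ls
    using norm_power_mult_gt_1[OF Q _ that, of "n - a + 1 + hd ls"] by (auto simp: mult.commute)
  with False show ?thesis
    unfolding right_sum_def[abs_def] by (auto intro!: holomorphic_intros)
qed

lemma left_sum_holomorphic:
  assumes Q: "2 \<le> norm Q" and "a \<le> n"
  shows "left_sum Z Q n a holomorphic_on - cball 0 (1/2) - {1}"
proof (cases "n - a = 0")
  case True
  then show ?thesis by (simp add: left_sum_def[abs_def])
next
  case False
  have nonzero: "1 - Q powi (int a + int (last ks) - int n) / T \<noteq> 0"
    if T: "T \<in> - cball 0 (1/2) - {1}" and ks: "ks \<in> compositions (n - a)" for T ks
  proof (cases "ks = [n - a]")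
    case True
    then show ?thesis using T \<open>a \<le> n\<close> by auto
  next
    case False
    then have "last ks < n - a" using composition_last_less[OF ks] \<open>n - a \<noteq> 0\<close> by simp
    then have "norm (Q powi (int a + int (last ks) - int n)) \<le> 1/2"
      by (intro norm_power_int_neg_le[OF Q]) simp
    then show ?thesis using T by auto
  qed
  have "T \<noteq> 0" if "T \<in> - cball 0 (1/2) - {1}" for T :: complex
    using that by auto
  with nonzero show ?thesis
    unfolding left_sum_def[abs_def] if_not_P[OF False]
    by (intro holomorphic_intros) blast+
qed

lemma holomorphic_on_scaled:
  assumes Q: "2 \<le> norm Q" and "0 < j" and Z: "Z holomorphic_on - cball 0 (1/2) - {1}"
  shows "(\<lambda>T. Z (Q ^ j * T)) holomorphic_on - cball 0 (1/2)"
proof -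
  have "(\<lambda>T. Q ^ j * T) ` (- cball 0 (1/2)) \<subseteq> - cball 0 (1/2) - {1}"
    using norm_power_mult_gt_1[OF Q \<open>0 < j\<close>] by force
  then have "(Z \<circ> (\<lambda>T. Q ^ j * T)) holomorphic_on - cball 0 (1/2)"
    by (intro holomorphic_on_compose_gen[OF _ Z]) (auto intro: holomorphic_intros)
  then show ?thesis by (simp add: o_def)
qed

lemma derive_step_holomorphic:
  assumes Q: "2 \<le> norm Q" and Z: "Z holomorphic_on - cball 0 (1/2) - {1}"
  shows "derive_step g Z Q n holomorphic_on - cball 0 (1/2) - {1}"
proof -
  have "(\<lambda>T. Z (Q ^ (n - a) * T)) holomorphic_on - cball 0 (1/2) - {1}" for a
  proof (cases "n - a = 0")
    case True
    then show ?thesis using Z by simp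
  next
    case False
    then have "(\<lambda>T. Z (Q ^ (n - a) * T)) holomorphic_on - cball 0 (1/2)"
      by (intro holomorphic_on_scaled[OF Q _ Z]) simp
    then show ?thesis by (rule holomorphic_on_subset) auto
  qed
  moreover have "right_sum Z Q n a holomorphic_on - cball 0 (1/2) - {1}" for a
    using right_sum_holomorphic[OF Q] by (rule holomorphic_on_subset) auto
  ultimately show ?thesis
    unfolding derive_step_def[abs_def]
    by (auto intro!: holomorphic_intros left_sum_holomorphic[OF Q])
qed

(* zeta(k+1) is defined as a limit at Q^(-(k+1)), which may be a singular point of Z; the
   functional equation moves it to the regular point Q^k. *)
lemma zhat_at_Suc:
  assumes Q: "2 \<le> norm Q" and "0 < k"
    and Z: "Z holomorphic_on - cball 0 (1/2) - {1}"
    and Z_eq: "\<And>T. T \<noteq> 0 \<Longrightarrow> Z (1 / (Q * T)) = Z T"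
  shows "zhat_at Z Q (Suc k) = Z (Q ^ k)"
proof -
  define w where "w = Q powi (- int (Suc k))"
  have "Q \<noteq> 0" using Q by auto
  have w_eq: "w = inverse (Q ^ Suc k)"
    unfolding w_def by (simp only: power_int_minus power_int_of_nat)
  have "w \<noteq> 0" and Qw: "1 / (Q * w) = Q ^ k"
    unfolding w_eq using \<open>Q \<noteq> 0\<close> by (simp_all add: field_simps)
  have "Q ^ k \<in> - cball 0 (1/2) - {1}"
    using two_le_norm_power[OF Q \<open>0 < k\<close>] by auto
  then have "isCont Z (Q ^ k)"
    by (rule holomorphic_on_imp_isCont[OF Z open_Diff[OF open_Compl[OF closed_cball] closed_singleton]])
  moreover have "((\<lambda>T. 1 / (Q * T)) \<longlongrightarrow> Q ^ k) (at w)"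
    unfolding Qw[symmetric] using \<open>Q \<noteq> 0\<close> \<open>w \<noteq> 0\<close> by (intro tendsto_intros) auto
  ultimately have "((\<lambda>T. Z (1 / (Q * T))) \<longlongrightarrow> Z (Q ^ k)) (at w)"
    by (rule isCont_tendsto_compose)
  moreover have "eventually (\<lambda>T. Z (1 / (Q * T)) = Z T) (at w)"
    using eventually_neq_at_within[of 0 w] by eventually_elim (rule Z_eq)
  ultimately have "(Z \<longlongrightarrow> Z (Q ^ k)) (at w)"
    by (rule Lim_transform_eventually)
  then show ?thesis using \<open>0 < k\<close> by (simp add: zhat_at_def w_def tendsto_Lim)
qed

lemma left_sum_residue:
  assumes Q: "2 \<le> norm Q" and "a < n"
  shows "((\<lambda>T. left_sum Z Q n a T * (T - 1)) \<longlongrightarrow> vhat Z Q (n - a)) (at 1)"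
proof -
  define c where "c ks = (\<Prod>k\<leftarrow>ks. vhat Z Q k) / adj_prod Q ks" for ks
  define w where "w ks = Q powi (int a + int (last ks) - int n)" for ks
  have "(\<lambda>T. left_sum Z Q n a T * (T - 1))
      = (\<lambda>T. \<Sum>ks\<in>compositions (n - a). c ks * (1 / (1 - w ks / T) * (T - 1)))"
    using \<open>a < n\<close> by (simp add: left_sum_def c_def w_def sum_distrib_right mult.assoc)
  moreover have "((\<lambda>T. c ks * (1 / (1 - w ks / T) * (T - 1)))
      \<longlongrightarrow> c ks * (if ks = [n - a] then 1 else 0)) (at 1)"
    if ks: "ks \<in> compositions (n - a)" for ks
  proof (cases "ks = [n - a]")
    case True
    then have "w ks = 1" using \<open>a < n\<close> by (simp add: w_def)
    have "eventually (\<lambda>T. T = 1 / (1 - w ks / T) * (T - 1)) (at (1::complex))"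
      using eventually_neq_at_within[of 0 1] eventually_neq_at_within[of 1 1]
      by eventually_elim (simp add: \<open>w ks = 1\<close> field_simps)
    then have "((\<lambda>T. 1 / (1 - w ks / T) * (T - 1)) \<longlongrightarrow> 1) (at 1)"
      by (rule Lim_transform_eventually[OF tendsto_ident_at])
    then show ?thesis using True by (intro tendsto_mult_left) simp
  next
    case False
    then have "last ks < n - a" using composition_last_less[OF ks] \<open>a < n\<close> by simp
    then have "norm (w ks) \<le> 1/2"
      unfolding w_def by (intro norm_power_int_neg_le[OF Q]) simp
    then have "1 - w ks / 1 \<noteq> 0" by auto
    then have "((\<lambda>T. 1 / (1 - w ks / T) * (T - 1)) \<longlongrightarrow> 1 / (1 - w ks / 1) * (1 - 1)) (at 1)"
      by (intro tendsto_intros) auto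
    then show ?thesis using False by (intro tendsto_mult_left) simp
  qed
  then have "((\<lambda>T. \<Sum>ks\<in>compositions (n - a). c ks * (1 / (1 - w ks / T) * (T - 1)))
      \<longlongrightarrow> (\<Sum>ks\<in>compositions (n - a). c ks * (if ks = [n - a] then 1 else 0))) (at 1)"
    by (rule tendsto_sum)
  moreover have "[n - a] \<in> compositions (n - a)"
    using \<open>a < n\<close> by (simp add: compositions_def)
  ultimately show ?thesis
    by (simp add: finite_compositions c_def if_distrib cong: if_cong)
qed

lemma derive_step_residue_limit:
  assumes Q: "2 \<le> norm Q" and Z: "Z holomorphic_on - cball 0 (1/2) - {1}"
    and Z_res: "((\<lambda>T. Z T * (T - 1)) \<longlongrightarrow> residue Z 1) (at 1)"
    and Z_eq: "\<And>T. T \<noteq> 0 \<Longrightarrow> Z (1 / (Q * T)) = Z T"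
  shows "((\<lambda>T. derive_step g Z Q n T * (T - 1)) \<longlongrightarrow>
     Q powi (int (n choose 2) * (int g - 1)) *
     (\<Sum>a=1..n. vhat Z Q (n - a + 1) * right_sum Z Q n a 1)) (at 1)"
proof -
  have open_region: "open (- cball (0::complex) (1/2))" by auto
  have "((\<lambda>T. left_sum Z Q n a T * Z (Q ^ (n - a) * T) * right_sum Z Q n a T * (T - 1))
      \<longlongrightarrow> vhat Z Q (n - a + 1) * right_sum Z Q n a 1) (at 1)" if a: "a \<in> {1..n}" for a
  proof -
    have "(right_sum Z Q n a \<longlongrightarrow> right_sum Z Q n a 1) (at 1)"
      using holomorphic_on_imp_isCont[OF right_sum_holomorphic[OF Q] open_region]
      by (simp add: isCont_def)
    moreover have "((\<lambda>T. left_sum Z Q n a T * (T - 1) * Z (Q ^ (n - a) * T))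
        \<longlongrightarrow> vhat Z Q (n - a + 1)) (at 1)"
    proof (cases "a = n")
      case True
      then show ?thesis using Z_res by (simp add: left_sum_def vhat_def zhat_at_def mult.commute)
    next
      case False
      then have "a < n" using a by simp
      have "isCont (\<lambda>T. Z (Q ^ (n - a) * T)) 1"
        using \<open>a < n\<close> by (intro holomorphic_on_imp_isCont[OF holomorphic_on_scaled[OF Q _ Z] open_region]) auto
      then have "((\<lambda>T. Z (Q ^ (n - a) * T)) \<longlongrightarrow> Z (Q ^ (n - a))) (at 1)"
        by (simp add: isCont_def)
      with left_sum_residue[OF Q \<open>a < n\<close>]
      have "((\<lambda>T. left_sum Z Q n a T * (T - 1) * Z (Q ^ (n - a) * T))
          \<longlongrightarrow> vhat Z Q (n - a) * Z (Q ^ (n - a))) (at 1)"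
        by (rule tendsto_mult)
      moreover have "vhat Z Q (n - a) * Z (Q ^ (n - a)) = vhat Z Q (n - a + 1)"
        using zhat_at_Suc[OF Q _ Z Z_eq, of "n - a"] \<open>a < n\<close> by (simp add: vhat_def)
      ultimately show ?thesis by (simp only:)
    qed
    ultimately show ?thesis
      using tendsto_mult by (fastforce simp: mult_ac)
  qed
  then have "((\<lambda>T. Q powi (int (n choose 2) * (int g - 1)) * (\<Sum>a=1..n.
        left_sum Z Q n a T * Z (Q ^ (n - a) * T) * right_sum Z Q n a T * (T - 1)))
      \<longlongrightarrow> Q powi (int (n choose 2) * (int g - 1)) *
        (\<Sum>a=1..n. vhat Z Q (n - a + 1) * right_sum Z Q n a 1)) (at 1)"
    by (intro tendsto_mult_left tendsto_sum)
  then show ?thesis by (simp add: derive_step_def sum_distrib_right mult.assoc)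
qed

lemma vhat_mult_right_sum:
  assumes "1 \<le> d" "d \<le> n"
  shows "vhat Z Q d * right_sum Z Q n (n + 1 - d) 1
    = (\<Sum>ls\<in>compositions (n - d). (\<Prod>l\<leftarrow>d # ls. vhat Z Q l) / adj_prod Q (d # ls))"
proof (cases "n - d = 0")
  case True
  then show ?thesis using assms by (simp add: right_sum_def)
next
  case False
  have "ls \<noteq> []" if "ls \<in> compositions (n - d)" for ls
    using that False by (auto simp: compositions_def)
  then show ?thesis
    using assms False
    by (auto simp: right_sum_def sum_distrib_left adj_prod_Cons field_simps intro!: sum.cong)
qed

lemma residue_derive_step:
  assumes Q: "2 \<le> norm Q" and "0 < n" and Z: "Z holomorphic_on - cball 0 (1/2) - {1}"
    and Z_res: "((\<lambda>T. Z T * (T - 1)) \<longlongrightarrow> residue Z 1) (at 1)"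
    and Z_eq: "\<And>T. T \<noteq> 0 \<Longrightarrow> Z (1 / (Q * T)) = Z T"
  shows "residue (derive_step g Z Q n) 1 = Q powi (int (n choose 2) * (int g - 1)) *
    (\<Sum>ds\<in>compositions n. (\<Prod>d\<leftarrow>ds. vhat Z Q d) / adj_prod Q ds)"
proof -
  have "(\<Sum>a=1..n. vhat Z Q (n - a + 1) * right_sum Z Q n a 1)
      = (\<Sum>d=1..n. vhat Z Q d * right_sum Z Q n (n + 1 - d) 1)"
    by (subst sum.atLeastAtMost_rev) (auto intro: sum.cong)
  also have "\<dots> = (\<Sum>ds\<in>compositions n. (\<Prod>d\<leftarrow>ds. vhat Z Q d) / adj_prod Q ds)"
    unfolding sum_compositions_Cons[OF \<open>0 < n\<close>] by (intro sum.cong refl vhat_mult_right_sum) auto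
  finally show ?thesis
    using derive_step_residue_limit[OF Q Z Z_res Z_eq, of g n]
    by (intro residue_simple'[OF _ _ derive_step_holomorphic[OF Q Z]]) auto
qed

lemma tendsto_residue_simple:
  assumes "open S" "z \<in> S" "f holomorphic_on S - {z}"
    and "((\<lambda>w. f w * (w - z)) \<longlongrightarrow> c) (at z)"
  shows "((\<lambda>w. f w * (w - z)) \<longlongrightarrow> residue f z) (at z)"
  using assms residue_simple' by metis

lemma Zhat0_simple_pole:
  assumes "2 \<le> q"
  shows "Zhat0 q g P holomorphic_on - cball 0 (1/2) - {1}"
    and "((\<lambda>T. Zhat0 q g P T * (T - 1)) \<longlongrightarrow> residue (Zhat0 q g P) 1) (at 1)"
proof -
  define h where "h T = - (T powi (1 - int g) * poly (map_poly of_int P) T / (1 - of_nat q * T))"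
    for T :: complex
  have "1 - of_nat q * T \<noteq> 0" "T \<noteq> 0" if "T \<in> - cball 0 (1/2)" for T :: complex
    using norm_power_mult_gt_1[of "of_nat q" 1 T] that assms by auto
  then have h: "h holomorphic_on - cball 0 (1/2)"
    unfolding h_def by (intro holomorphic_intros) auto
  have Zhat0_eq: "Zhat0 q g P T = h T / (T - 1)" if "T \<noteq> 1" for T
  proof -
    have "(1 - T) * (1 - of_nat q * T) = - ((1 - of_nat q * T) * (T - 1))"
      by (simp add: algebra_simps)
    then show ?thesis by (simp add: Zhat0_def h_def)
  qed
  have "(\<lambda>T. h T / (T - 1)) holomorphic_on - cball 0 (1/2) - {1}"
    by (intro holomorphic_intros holomorphic_on_subset[OF h]) auto
  then show holo: "Zhat0 q g P holomorphic_on - cball 0 (1/2) - {1}"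
    by (rule holomorphic_transform) (simp add: Zhat0_eq)
  have "isCont h 1" by (rule holomorphic_on_imp_isCont[OF h]) auto
  then have "(h \<longlongrightarrow> h 1) (at 1)" by (rule isContD)
  moreover have "eventually (\<lambda>T. h T = Zhat0 q g P T * (T - 1)) (at 1)"
    using eventually_neq_at_within[of 1 1] by eventually_elim (simp add: Zhat0_eq)
  ultimately have "((\<lambda>T. Zhat0 q g P T * (T - 1)) \<longlongrightarrow> h 1) (at 1)"
    by (rule Lim_transform_eventually)
  then show "((\<lambda>T. Zhat0 q g P T * (T - 1)) \<longlongrightarrow> residue (Zhat0 q g P) 1) (at 1)"
    by (intro tendsto_residue_simple[OF _ _ holo]) auto
qed

lemma two_le_norm_q_power:
  assumes "2 \<le> q" and "\<forall>n\<in>set rs. 0 < n"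
  shows "2 \<le> norm (of_nat q ^ prod_list rs :: complex)"
proof -
  have "0 < prod_list rs" using assms(2) by (induction rs) auto
  then show ?thesis using two_le_norm_power[of "of_nat q"] assms(1) by simp
qed

lemma dzeta_rev_simple_pole:
  assumes P: "curve_L_poly q g P" and "\<forall>n\<in>set rs. 0 < n"
  shows "dzeta_rev q g P rs holomorphic_on - cball 0 (1/2) - {1} \<and>
    ((\<lambda>T. dzeta_rev q g P rs T * (T - 1)) \<longlongrightarrow> residue (dzeta_rev q g P rs) 1) (at 1)"
  using assms(2)
proof (induction rs)
  case Nil
  show ?case using Zhat0_simple_pole[OF two_le_of_curve_L_poly[OF P]] by simp
next
  case (Cons n rs)
  let ?Q = "of_nat q ^ prod_list rs :: complex"
  have Q: "2 \<le> norm ?Q"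
    using two_le_norm_q_power[OF two_le_of_curve_L_poly[OF P]] Cons.prems by simp
  have Z: "dzeta_rev q g P rs holomorphic_on - cball 0 (1/2) - {1}"
    and Z_res: "((\<lambda>T. dzeta_rev q g P rs T * (T - 1)) \<longlongrightarrow> residue (dzeta_rev q g P rs) 1) (at 1)"
    using Cons by auto
  have holo: "derive_step g (dzeta_rev q g P rs) ?Q n holomorphic_on - cball 0 (1/2) - {1}"
    by (rule derive_step_holomorphic[OF Q Z])
  moreover have "((\<lambda>T. derive_step g (dzeta_rev q g P rs) ?Q n T * (T - 1))
      \<longlongrightarrow> residue (derive_step g (dzeta_rev q g P rs) ?Q n) 1) (at 1)"
    using derive_step_residue_limit[OF Q Z Z_res dzeta_rev_functional_eq[OF P]]
    by (intro tendsto_residue_simple[OF _ _ holo]) auto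
  ultimately show ?case by simp
qed

theorem theorem2p6:
  fixes q g :: nat and P :: "int poly" and ns :: "nat list"
  assumes "curve_L_poly q g P"
    and "ns \<noteq> []" and "\<forall>n\<in>set ns. n > 0"
  shows "residue (dzeta q g P ns) 1 =
    qn q (butlast ns) powi (int (last ns choose 2) * (int g - 1)) *
    (\<Sum>ds\<in>compositions (last ns).
       (\<Prod>d\<leftarrow>ds. vhat (dzeta q g P (butlast ns)) (qn q (butlast ns)) d)
       / adj_prod (qn q (butlast ns)) ds)"
proof -
  define rs where "rs = rev (butlast ns)"
  let ?Q = "of_nat q ^ prod_list rs :: complex"
  have rev_ns: "rev ns = last ns # rs"
    using assms(2) by (metis rs_def append_butlast_last_id rev.simps(2) rev_rev_ident)
  have pos: "\<forall>n\<in>set (last ns # rs). 0 < n"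
    using assms(3) by (simp flip: rev_ns)
  have Q: "2 \<le> norm ?Q"
    using two_le_norm_q_power[OF two_le_of_curve_L_poly[OF assms(1)]] pos by simp
  have Z: "dzeta_rev q g P rs holomorphic_on - cball 0 (1/2) - {1}"
    and Z_res: "((\<lambda>T. dzeta_rev q g P rs T * (T - 1)) \<longlongrightarrow> residue (dzeta_rev q g P rs) 1) (at 1)"
    using dzeta_rev_simple_pole[OF assms(1), of rs] pos by auto
  have "dzeta q g P ns = derive_step g (dzeta_rev q g P rs) ?Q (last ns)"
    by (simp add: dzeta_def rev_ns)
  moreover have "dzeta q g P (butlast ns) = dzeta_rev q g P rs" "qn q (butlast ns) = ?Q"
    by (simp_all add: dzeta_def qn_def rs_def)
  moreover have "0 < last ns" using pos by simp
  ultimately show ?thesis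
    using residue_derive_step[OF Q _ Z Z_res dzeta_rev_functional_eq[OF assms(1)]] by simp
qed

end
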